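(* Let $p(x)$ be a probability distribution on a feature space $\mathcal X$, let $p_{\mathrm{CM}}(y\mid x)$, $y\in\{+1,-1\}$, be a conditional probability distribution, and let $\mathcal D_{\mathrm{CM}}=p(x)\,p_{\mathrm{CM}}(y\mid x)$ be the induced joint distribution of $(x,y)$. Let $r(y,x,\theta)$ be a measurable risk function with $0\le r(y,x,\theta)\le 1$ for all $y,x$ and a fixed parameter $\theta$, and write $r_1(x)=r(+1,x,\theta)$, $r_2(x)=r(-1,x,\theta)$. Then for every constant $c>0$, $$\Big(\mathbb E_{\mathcal D_{\mathrm{CM}}}\big[\mathbf 1_{r(y,x,\theta)>r(-y,x,\theta)}\big]\Big)^2\le \mathbb E_{p(x)}\Big[c\,p_{\mathrm{CM}}(+1\mid x)\,r_1(x)+c\,p_{\mathrm{CM}}(-1\mid x)\,r_2(x)+\log\big(1+e^{-c|r_1(x)-r_2(x)|}\big)+2e^{-2c|r_1(x)-r_2(x)|}\Big].$$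
   Context: Binary classification with labels $y\in\{+1,-1\}$. The left-hand side is the misclassification error, under data distributed as $\mathcal D_{\mathrm{CM}}$, of the classifier that predicts $\mathrm{argmin}_{y\in\{\pm1\}} r(y,x,\theta)$. *)

theory Defs
  imports "HOL-Probability.Probability"
begin

definition labels :: "int set" where "labels = {1, -1}"

definition D_CM :: "'a measure \<Rightarrow> (int \<Rightarrow> 'a \<Rightarrow> real) \<Rightarrow> ('a \<times> int) measure" where
  "D_CM p pCM = density (p \<Otimes>\<^sub>M count_space labels) (\<lambda>(x, y). ennreal (pCM y x))"

end

theory Submission
  imports Defs "HOL-Library.Sum_of_Squares"
begin

text \<open>Conditioned on x, the misclassification error is the weight q of the label whose risk
  is strictly larger (0 on ties).  With t = c |r1 - r2| one has q \<le> q t + 2 exp(-2t), and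
  q t is dominated by the linear terms of the bound, so the conditional error is pointwise
  below the integrand on the right.  Integrating over p(x), and
  using that the error lies in [0,1] so that its square is at most itself, gives the theorem.\<close>

lemma one_minus_le_two_exp_neg_two:
  fixes t :: real
  assumes "0 \<le> t"
  shows "1 - t \<le> 2 * exp (- 2 * t)"
proof (cases "t \<le> 1")
  case True
  \<comment> \<open>with u = 1 - t/2 \<in> [1/2,1]: 1 - t = 2u - 1 \<le> 2u^4 \<le> 2 exp(-t/2)^4\<close>
  define u where "u = 1 - t / 2"
  have u: "1/2 \<le> u" "u \<le> 1" using assms True by (auto simp: u_def)
  have "u \<le> exp (- (t / 2))" using exp_ge_add_one_self[of "- (t / 2)"] by (simp add: u_def)
  then have "u ^ 4 \<le> exp (- (t / 2)) ^ 4" by (rule power_mono) (use u in auto)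
  also have "\<dots> = exp (- 2 * t)" by (simp add: exp_of_nat_mult[symmetric])
  finally have "u ^ 4 \<le> exp (- 2 * t)" .
  moreover have "2 * u - 1 \<le> 2 * u ^ 4" using u by sos
  ultimately show ?thesis by (simp add: u_def)
next
  case False
  then show ?thesis using exp_gt_zero[of "- 2 * t"] by linarith
qed

lemma le_mult_plus_two_exp_neg_two:
  fixes q t :: real
  assumes "0 \<le> q" "q \<le> 1" "0 \<le> t"
  shows "q \<le> q * t + 2 * exp (- 2 * t)"
proof (cases "t \<le> 1")
  case True
  have "q * (1 - t) \<le> 1 - t" using assms True by (simp add: mult_left_le_one_le)
  with one_minus_le_two_exp_neg_two[OF assms(3)] show ?thesis by (simp add: algebra_simps)
next
  case False
  then have "q * 1 \<le> q * t" using assms by (intro mult_left_mono) auto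
  then show ?thesis using exp_gt_zero[of "- 2 * t"] by linarith
qed

lemma misclassification_le_surrogate_ordered:
  fixes p1 p2 a b c :: real
  assumes "0 \<le> p1" "p1 \<le> 1" "0 \<le> p2" "0 \<le> b" "b < a" "0 < c"
  shows "p1 \<le> c * p1 * a + c * p2 * b + ln (1 + exp (- c * \<bar>a - b\<bar>))
              + 2 * exp (- 2 * c * \<bar>a - b\<bar>)"
proof -
  have "p1 \<le> p1 * (c * \<bar>a - b\<bar>) + 2 * exp (- 2 * (c * \<bar>a - b\<bar>))"
    using assms by (intro le_mult_plus_two_exp_neg_two) auto
  also have "p1 * (c * \<bar>a - b\<bar>) \<le> c * p1 * a + c * p2 * b"
    using assms by (simp add: algebra_simps)
  finally have "p1 \<le> c * p1 * a + c * p2 * b + 2 * exp (- 2 * c * \<bar>a - b\<bar>)"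
    by (simp add: mult.assoc)
  moreover have "0 \<le> ln (1 + exp (- c * \<bar>a - b\<bar>))" by simp
  ultimately show ?thesis by linarith
qed

lemma misclassification_le_surrogate:
  fixes p1 p2 a b c :: real
  assumes "0 \<le> p1" "0 \<le> p2" "p1 + p2 = 1" "0 \<le> a" "0 \<le> b" "0 < c"
  shows "p1 * (if a > b then 1 else 0) + p2 * (if b > a then 1 else 0)
     \<le> c * p1 * a + c * p2 * b + ln (1 + exp (- c * \<bar>a - b\<bar>)) + 2 * exp (- 2 * c * \<bar>a - b\<bar>)"
proof -
  have "p1 \<le> 1" "p2 \<le> 1" using assms(1-3) by linarith+
  consider "b < a" | "a < b" | "a = b" by linarith
  then show ?thesis
  proof cases
    case 1
    with misclassification_le_surrogate_ordered[OF assms(1) \<open>p1 \<le> 1\<close> assms(2,5) 1 assms(6)]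
    show ?thesis by simp
  next
    case 2
    with misclassification_le_surrogate_ordered[OF assms(2) \<open>p2 \<le> 1\<close> assms(1,4) 2 assms(6)]
    show ?thesis by (simp add: abs_minus_commute add_ac)
  next
    case 3
    then show ?thesis using assms by (simp add: add_nonneg_nonneg)
  qed
qed

lemma surrogate_bounded:
  fixes p1 p2 a b c :: real
  assumes "0 \<le> p1" "0 \<le> p2" "p1 + p2 = 1" "0 \<le> a" "a \<le> 1" "0 \<le> b" "b \<le> 1" "0 < c"
  shows "\<bar>c * p1 * a + c * p2 * b + ln (1 + exp (- c * \<bar>a - b\<bar>))
            + 2 * exp (- 2 * c * \<bar>a - b\<bar>)\<bar> \<le> 2 * c + 3"
proof -
  have "c * p1 * a \<le> c" "c * p2 * b \<le> c"
    using assms by (auto simp: mult.assoc intro!: mult_le_one)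
  moreover have "ln (1 + exp (- c * \<bar>a - b\<bar>)) \<le> 1"
  proof -
    have "exp (- c * \<bar>a - b\<bar>) \<le> 1" using assms by simp
    moreover have "ln (1 + exp (- c * \<bar>a - b\<bar>)) \<le> exp (- c * \<bar>a - b\<bar>)"
      by (rule ln_add_one_self_le_self) simp
    ultimately show ?thesis by linarith
  qed
  moreover have "exp (- 2 * c * \<bar>a - b\<bar>) \<le> 1" using assms by simp
  moreover have "0 \<le> c * p1 * a" "0 \<le> c * p2 * b" using assms by auto
  moreover have "0 \<le> ln (1 + exp (- c * \<bar>a - b\<bar>))" by (rule ln_ge_zero) simp
  moreover note exp_gt_zero[of "- 2 * c * \<bar>a - b\<bar>"]
  ultimately show ?thesis unfolding abs_le_iff by (intro conjI) linarith+
qed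

lemma measurable_pair_count_space_countable:
  assumes "countable I" "\<And>i. i \<in> I \<Longrightarrow> (\<lambda>x. f (x, i)) \<in> measurable M N"
  shows "f \<in> measurable (M \<Otimes>\<^sub>M count_space I) N"
proof -
  have "(\<lambda>z. (\<lambda>i z. f (fst z, i)) (snd z) z) \<in> measurable (M \<Otimes>\<^sub>M count_space I) N"
    by (rule measurable_compose_countable'[OF _ measurable_snd assms(1)]) (use assms(2) in simp)
  then show ?thesis by simp
qed

lemma integral_D_CM:
  fixes f :: "'a \<times> int \<Rightarrow> real"
  assumes "prob_space p"
    and "\<And>y. y \<in> labels \<Longrightarrow> pCM y \<in> borel_measurable p"
    and "\<And>y x. y \<in> labels \<Longrightarrow> x \<in> space p \<Longrightarrow> pCM y x \<ge> 0"
    and "\<And>x. x \<in> space p \<Longrightarrow> pCM 1 x + pCM (-1) x = 1"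
    and "\<And>y. y \<in> labels \<Longrightarrow> (\<lambda>x. f (x, y)) \<in> borel_measurable p"
    and "\<And>x y. x \<in> space p \<Longrightarrow> y \<in> labels \<Longrightarrow> \<bar>f (x, y)\<bar> \<le> B"
  shows "(\<integral>z. f z \<partial>D_CM p pCM) = (\<integral>x. pCM 1 x * f (x, 1) + pCM (-1) x * f (x, -1) \<partial>p)"
proof -
  interpret P: prob_space p by fact
  let ?L = "count_space labels"
  define w where "w = (\<lambda>(x, y). pCM y x)"
  have fin: "finite labels" and cnt: "countable labels" by (simp_all add: labels_def)
  interpret C: finite_measure ?L using fin by (rule finite_measure_count_space)
  interpret PC: pair_sigma_finite p ?L
    by (intro pair_sigma_finite.intro P.sigma_finite_measure_axioms C.sigma_finite_measure_axioms)
  interpret M: finite_measure "p \<Otimes>\<^sub>M ?L"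
    by (intro finite_measure_pair_measure P.finite_measure_axioms C.finite_measure_axioms)
  have w_meas: "w \<in> borel_measurable (p \<Otimes>\<^sub>M ?L)"
    using cnt by (rule measurable_pair_count_space_countable) (simp add: w_def assms(2))
  have f_meas: "f \<in> borel_measurable (p \<Otimes>\<^sub>M ?L)"
    using cnt assms(5) by (rule measurable_pair_count_space_countable)
  have w_bounds: "0 \<le> pCM y x" "pCM y x \<le> 1" if "x \<in> space p" "y \<in> labels" for x y
    using that assms(3)[of 1 x] assms(3)[of "-1" x] assms(4)[of x] by (auto simp: labels_def)
  have D: "D_CM p pCM = density (p \<Otimes>\<^sub>M ?L) (\<lambda>z. ennreal (w z))"
    unfolding D_CM_def w_def by (simp add: case_prod_beta')
  have "(\<integral>z. f z \<partial>D_CM p pCM) = (\<integral>z. w z *\<^sub>R f z \<partial>(p \<Otimes>\<^sub>M ?L))"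
    unfolding D
  proof (rule integral_density[OF f_meas w_meas])
    show "AE z in p \<Otimes>\<^sub>M ?L. 0 \<le> w z"
      using w_bounds(1) by (intro AE_I2) (auto simp: space_pair_measure w_def)
  qed
  also have "\<dots> = (\<integral>x. (\<integral>y. w (x, y) *\<^sub>R f (x, y) \<partial>?L) \<partial>p)"
  proof (rule PC.integral_fst'[symmetric, of "\<lambda>z. w z *\<^sub>R f z"])
    show "integrable (p \<Otimes>\<^sub>M ?L) (\<lambda>z. w z *\<^sub>R f z)"
    proof (rule M.integrable_const_bound[where B = B])
      show "AE z in p \<Otimes>\<^sub>M ?L. norm (w z *\<^sub>R f z) \<le> B"
      proof (rule AE_I2)
        fix z assume "z \<in> space (p \<Otimes>\<^sub>M ?L)"
        then obtain x y where z: "z = (x, y)" "x \<in> space p" "y \<in> labels"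
          by (auto simp: space_pair_measure)
        have "\<bar>pCM y x\<bar> * \<bar>f (x, y)\<bar> \<le> 1 * B"
          using w_bounds[OF z(2,3)] assms(6)[OF z(2,3)] by (intro mult_mono) auto
        then show "norm (w z *\<^sub>R f z) \<le> B" by (simp add: z w_def abs_mult)
      qed
    qed (intro borel_measurable_scaleR w_meas f_meas)
  qed
  also have "\<dots> = (\<integral>x. pCM 1 x * f (x, 1) + pCM (-1) x * f (x, -1) \<partial>p)"
    using fin by (simp add: w_def lebesgue_integral_count_space_finite labels_def)
  finally show ?thesis .
qed

lemma square_integral_le_integral:
  fixes f g :: "'a \<Rightarrow> real"
  assumes "prob_space M" "f \<in> borel_measurable M" "integrable M g"
    and "\<And>x. x \<in> space M \<Longrightarrow> 0 \<le> f x \<and> f x \<le> 1"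
    and "\<And>x. x \<in> space M \<Longrightarrow> f x \<le> g x"
  shows "(\<integral>x. f x \<partial>M)\<^sup>2 \<le> (\<integral>x. g x \<partial>M)"
proof -
  interpret prob_space M by fact
  have f_int: "integrable M f"
    by (rule integrable_const_bound[where B = 1]) (use assms(2,4) in \<open>auto intro!: AE_I2\<close>)
  have "0 \<le> (\<integral>x. f x \<partial>M)" using assms(4) by (intro integral_nonneg_AE AE_I2) auto
  moreover have "(\<integral>x. f x \<partial>M) \<le> 1"
    using integral_mono[OF f_int integrable_const[of 1]] assms(4) by (simp add: prob_space)
  ultimately have "(\<integral>x. f x \<partial>M)\<^sup>2 \<le> (\<integral>x. f x \<partial>M)"
    by (simp add: power2_eq_square mult_left_le_one_le)
  also have "\<dots> \<le> (\<integral>x. g x \<partial>M)"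
    using f_int assms(3,5) by (rule integral_mono)
  finally show ?thesis .
qed

lemma misclassification_error_D_CM:
  fixes r :: "int \<Rightarrow> 'a \<Rightarrow> real"
  assumes "prob_space p"
    and "\<And>y. y \<in> labels \<Longrightarrow> pCM y \<in> borel_measurable p"
    and "\<And>y x. y \<in> labels \<Longrightarrow> x \<in> space p \<Longrightarrow> pCM y x \<ge> 0"
    and "\<And>x. x \<in> space p \<Longrightarrow> pCM 1 x + pCM (-1) x = 1"
    and "\<And>y. y \<in> labels \<Longrightarrow> r y \<in> borel_measurable p"
  shows "(\<integral>(x, y). (if r y x > r (-y) x then 1 else 0) \<partial>(D_CM p pCM))
    = (\<integral>x. pCM 1 x * (if r 1 x > r (-1) x then 1 else 0)
          + pCM (-1) x * (if r (-1) x > r 1 x then 1 else 0) \<partial>p)"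
proof (subst integral_D_CM[OF assms(1-4), where B = 1])
  fix y :: int assume "y \<in> labels"
  then have [measurable]: "r y \<in> borel_measurable p" "r (-y) \<in> borel_measurable p"
    using assms(5) by (auto simp: labels_def)
  have "(\<lambda>x. if r (-y) x < r y x then 1 else 0 :: real) \<in> borel_measurable p" by measurable
  then show "(\<lambda>x. (\<lambda>(x, y). if r (-y) x < r y x then 1 else 0 :: real) (x, y)) \<in> borel_measurable p"
    by simp
qed simp_all

theorem theorem1:
  fixes p :: "'a measure" and pCM :: "int \<Rightarrow> 'a \<Rightarrow> real"
    and r :: "int \<Rightarrow> 'a \<Rightarrow> 'b \<Rightarrow> real" and \<theta> :: 'b and c :: real
  assumes "prob_space p"
    and "\<And>y. y \<in> labels \<Longrightarrow> pCM y \<in> borel_measurable p"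
    and "\<And>y x. y \<in> labels \<Longrightarrow> x \<in> space p \<Longrightarrow> pCM y x \<ge> 0"
    and "\<And>x. x \<in> space p \<Longrightarrow> pCM 1 x + pCM (-1) x = 1"
    and "\<And>y. y \<in> labels \<Longrightarrow> (\<lambda>x. r y x \<theta>) \<in> borel_measurable p"
    and "\<And>y x. y \<in> labels \<Longrightarrow> x \<in> space p \<Longrightarrow> 0 \<le> r y x \<theta> \<and> r y x \<theta> \<le> 1"
    and "c > 0"
  shows "(\<integral>(x, y). (if r y x \<theta> > r (-y) x \<theta> then 1 else 0) \<partial>(D_CM p pCM))\<^sup>2
     \<le> (\<integral>x. c * pCM 1 x * r 1 x \<theta> + c * pCM (-1) x * r (-1) x \<theta>
            + ln (1 + exp (- c * \<bar>r 1 x \<theta> - r (-1) x \<theta>\<bar>))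
            + 2 * exp (- 2 * c * \<bar>r 1 x \<theta> - r (-1) x \<theta>\<bar>) \<partial>p)"
proof -
  interpret prob_space p by fact
  have labels: "1 \<in> labels" "-1 \<in> labels" by (simp_all add: labels_def)
  have [measurable]: "pCM 1 \<in> borel_measurable p" "pCM (-1) \<in> borel_measurable p"
    "(\<lambda>x. r 1 x \<theta>) \<in> borel_measurable p" "(\<lambda>x. r (-1) x \<theta>) \<in> borel_measurable p"
    using assms(2,5) labels by auto
  have bounds: "0 \<le> pCM 1 x" "0 \<le> pCM (-1) x" "pCM 1 x + pCM (-1) x = 1"
    "pCM 1 x \<le> 1" "pCM (-1) x \<le> 1" "0 \<le> r 1 x \<theta>" "r 1 x \<theta> \<le> 1" "0 \<le> r (-1) x \<theta>" "r (-1) x \<theta> \<le> 1" if "x \<in> space p" for x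
    using assms(3,4,6) labels that by force+
  define err where "err = (\<lambda>x. pCM 1 x * (if r 1 x \<theta> > r (-1) x \<theta> then 1 else 0)
    + pCM (-1) x * (if r (-1) x \<theta> > r 1 x \<theta> then 1 else 0))"
  define bound where "bound = (\<lambda>x. c * pCM 1 x * r 1 x \<theta> + c * pCM (-1) x * r (-1) x \<theta>
    + ln (1 + exp (- c * \<bar>r 1 x \<theta> - r (-1) x \<theta>\<bar>))
    + 2 * exp (- 2 * c * \<bar>r 1 x \<theta> - r (-1) x \<theta>\<bar>))"
  have "integrable p bound"
  proof (rule integrable_const_bound[where B = "2 * c + 3"])
    show "AE x in p. norm (bound x) \<le> 2 * c + 3"
      using bounds surrogate_bounded[OF _ _ _ _ _ _ _ assms(7)] by (intro AE_I2) (auto simp: bound_def)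
    show "bound \<in> borel_measurable p" unfolding bound_def by measurable
  qed
  moreover have "err \<in> borel_measurable p" unfolding err_def by measurable
  ultimately have "(\<integral>x. err x \<partial>p)\<^sup>2 \<le> (\<integral>x. bound x \<partial>p)"
    using bounds misclassification_le_surrogate[OF _ _ _ _ _ assms(7)]
    by (intro square_integral_le_integral[OF assms(1)]) (auto simp: err_def bound_def)
  moreover have "(\<integral>(x, y). (if r y x \<theta> > r (-y) x \<theta> then 1 else 0) \<partial>(D_CM p pCM)) = (\<integral>x. err x \<partial>p)"
    unfolding err_def using assms(1-5) by (rule misclassification_error_D_CM)
  ultimately show ?thesis by (simp add: bound_def)
qed

end
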